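(* Let $P$ be an APP, $I$ a linear invariant for $\mathcal{G}_P$, and $\eta$ an LRSM with respect to $I$ with constants $\epsilon\ge1$, $K,K'\le-1$. Let $\sigma$ be an $\eta$-greedy angelic scheduler, $\pi$ any demonic scheduler, $X_n:=\eta(\theta_n,\overline{\mathbf{x}}_n)$, and suppose $a<b$ are reals with $-\epsilon\in[a,b]$ such that $X_{n+1}-X_n\in[a,b]$ holds $\mathbb{P}^{\sigma,\pi}$-almost surely for all $n$. Let $W_0:=\eta(\ell_0,\mathbf{x}_0)$. Then for every integer $n>\frac{W_0}{\epsilon}+1$, \[\mathbb{P}^{\sigma,\pi}(T>n)\le\exp\Big(-\frac{2(\epsilon(n-1)-W_0)^2}{(n-1)(b-a)^2}\Big).\]
   Context: Affine probabilistic programs (APPs) and their semantics. An APP $P$ has finitely many real-valued program variables $X=\{x_1,\dots,x_{|X|}\}$ with a given initial valuation $\mathbf{x}_0\in\mathbb{R}^{|X|}$, and finitely many real-valued random variables $R$ with a fixed joint distribution $\mathcal{D}$ whose every component is integrable; a fresh sample $\mathbf{r}\sim\mathcal{D}$ is drawn at each step, independently of the past. $P$ is built from assignments $x:=e$ ($e$ an affine expression over program and random variables), skip, sequencing, while loops guarded by propositionally linear predicates (finite disjunctions of linear assertions; a linear assertion is a finite conjunction of linear constraints, each a non-strict inequality between affine expressions or its negation), and if-then-else statements whose guard is either a propositionally linear predicate or one of the keywords angel (angelic nondeterministic choice), demon (demonic nondeterministic choice), prob($p$) (then-branch taken with probability $p\in[0,1]$). $P$ is interpreted as a stochastic game structure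 $\mathcal{G}_P$: a finite set $L$ of locations partitioned into angelic, demonic, probabilistic and deterministic locations; an initial location $\ell_0$; a deterministic terminal location $\ell_{out}$ with an identity self-loop; and transitions $(\ell,f,\ell')$ with affine update functions $f:\mathbb{R}^{|X|}\times\mathbb{R}^{|R|}\to\mathbb{R}^{|X|}$. An assignment yields a deterministic location with one transition performing the update; all other transitions (control flow, and all transitions out of angelic, demonic and probabilistic locations) have the identity update $id$. Each location has at most two outgoing transitions; a probabilistic location $\ell$ carries a probability distribution $Pr_\ell$ over its outgoing transitions; each transition $\tau$ out of a deterministic location has a guard $G(\tau)$ (a propositionally linear predicate), and the guards of the transitions out of one location are mutually exclusive and jointly exhaustive. A configuration is a pair $(\ell,\mathbf{x})$. An angelic (resp. demonic) scheduler maps every finite sequence of configurations ending in an angelic (resp. demonic) location $\ell$ to a transition out of $\ell$. For an angelic scheduler $\sigma$ and demonic scheduler $\pi$, a run $c_1c_2\cdots$ is generated from $c_1=(\ell_0,\mathbf{x}_0)$: if $c_n=(\ell,\mathbf{x})$, sample $\mathbf{r}\sim\mathcal{D}$, pick a transition $(\ell,f,\ell')$ out of $\ell$ (by $\sigma$ resp. $\pi$ applied to $c_1\cdots c_n$ if $\ell$ is angelic resp. demonic; randomly according to $Pr_\ell$ if probabilistic; the unique one whose guard $\mathbf{x}$ satisfies if deterministic) and set $c_{n+1}=(\ell',f(\mathbf{x},\mathbf{r}))$. This yields a probability measure $\mathbb{P}^{\sigma,\pi}$ on runs with expectation $\mathbb{E}^{\sigma,\pi}$. Let $\theta_n$ and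 $\overline{\mathbf{x}}_n$ be the location and valuation of $c_n$, let $\mathcal{F}_n$ be the $\sigma$-algebra generated by $\theta_j,\overline{\mathbf{x}}_j$ for $j\le n$, and let $T=\min\{n:\theta_n=\ell_{out}\}$ ($\min\emptyset=\infty$) be the termination time. A configuration is reachable if it occurs on some finite path from $(\ell_0,\mathbf{x}_0)$. Linear invariants and LRSMs. A linear invariant $I$ assigns to each location $\ell$ a finite set $I(\ell)$ of linear assertions over $X$ such that every reachable configuration $(\ell,\mathbf{x})$ satisfies $\mathbf{x}\in\bigcup I(\ell)$. For $\eta:L\times\mathbb{R}^{|X|}\to\mathbb{R}$, the pre-expectation $\mathrm{pre}_\eta(\ell,\mathbf{x})$ equals $\sum_{(\ell,id,\ell')}Pr_\ell(\ell,id,\ell')\,\eta(\ell',\mathbf{x})$ if $\ell$ is probabilistic; $\max_{(\ell,id,\ell')}\eta(\ell',\mathbf{x})$ if $\ell$ is demonic; $\min_{(\ell,id,\ell')}\eta(\ell',\mathbf{x})$ if $\ell$ is angelic; and $\eta(\ell',\mathbb{E}_{\mathbf{r}\sim\mathcal{D}}f(\mathbf{x},\mathbf{r}))$ if $\ell$ is deterministic and $(\ell,f,\ell')$ is the transition whose guard $\mathbf{x}$ satisfies. A linear ranking-supermartingale map (LRSM) with respect to $I$ is a function $\eta:L\times\mathbb{R}^{|X|}\to\mathbb{R}$ for which there exist $\epsilon\ge 1$ and $K,K'\le -1$ such that for all $\ell\in L$, $\mathbf{x}\in\mathbb{R}^{|X|}$: (C1) $\eta(\ell,\cdot)$ is affine;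 (C2) if $\ell\ne\ell_{out}$ and $\mathbf{x}\in\bigcup I(\ell)$ then $\eta(\ell,\mathbf{x})\ge0$; (C3) if $\ell=\ell_{out}$ and $\mathbf{x}\in\bigcup I(\ell)$ then $K'\le\eta(\ell,\mathbf{x})\le K$; (C4) if $\ell\ne\ell_{out}$ and $\mathbf{x}\in\bigcup I(\ell)$ then $\mathrm{pre}_\eta(\ell,\mathbf{x})\le\eta(\ell,\mathbf{x})-\epsilon$. An angelic scheduler is $\eta$-greedy if, on every finite path ending in a configuration $(\ell,\mathbf{x})$ with $\ell$ angelic, it chooses a transition $(\ell,id,\ell')$ with $\eta(\ell',\mathbf{x})=\min_{(\ell,id,\ell'')}\eta(\ell'',\mathbf{x})$. *)

theory Defs
  imports "HOL-Probability.Probability"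
begin

text \<open>A linear constraint over program variables X is a non-strict inequality between affine
 expressions, normalised to  a . x <= c  (Leq a c), or its negation  not (a . x <= c)
 (NegLeq a c).\<close>

datatype 'x lcons = Leq "real^'x" real | NegLeq "real^'x" real

type_synonym 'x lassert = "'x lcons list"
type_synonym 'x lpred = "'x lassert list"

fun csat :: "'x::finite lcons \<Rightarrow> real^'x \<Rightarrow> bool" where
  "csat (Leq a c) x = (a \<bullet> x \<le> c)"
| "csat (NegLeq a c) x = (\<not> (a \<bullet> x \<le> c))"

definition asat :: "'x::finite lassert \<Rightarrow> real^'x \<Rightarrow> bool" where
  "asat A x = (\<forall>C\<in>set A. csat C x)"

definition psat :: "'x::finite lpred \<Rightarrow> real^'x \<Rightarrow> bool" where
  "psat P x = (\<exists>A\<in>set P. asat A x)"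

datatype lkind = Angelic | Demonic | Probabilistic | Deterministic

text \<open>Locations have type 'l (finite), program variables are indexed by 'x, random variables
 by 'r.  The outgoing transitions of a location l are the list trans l; transition number i
 is (f, l') with affine update f.  guard l i is the guard of transition i (used at
 deterministic locations), tprob l i its probability (used at probabilistic locations).\<close>

record ('l, 'x, 'r) sgs =
  kind :: "'l \<Rightarrow> lkind"
  init_loc :: 'l
  init_val :: "real^'x"
  out_loc :: 'l
  trans :: "'l \<Rightarrow> ((real^'x \<Rightarrow> real^'r \<Rightarrow> real^'x) \<times> 'l) list"
  guard :: "'l \<Rightarrow> nat \<Rightarrow> 'x lpred"
  tprob :: "'l \<Rightarrow> nat \<Rightarrow> real"

definition affine_upd :: "(real^'x::finite \<Rightarrow> real^'r::finite \<Rightarrow> real^'x) \<Rightarrow> bool" where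
  "affine_upd f = (\<exists>(A::real^'x^'x) (B::real^'r^'x) c. \<forall>x r. f x r = A *v x + B *v r + c)"

definition rv_dist :: "(real^'r::finite) measure \<Rightarrow> bool" where
  "rv_dist D = (prob_space D \<and> sets D = sets borel \<and> (\<forall>j. integrable D (\<lambda>r. r $ j)))"

definition wf_sgs :: "('l::finite, 'x::finite, 'r::finite) sgs \<Rightarrow> bool" where
  "wf_sgs G = (
     (\<forall>l. 1 \<le> length (trans G l) \<and> length (trans G l) \<le> 2)
   \<and> (\<forall>l i. i < length (trans G l) \<longrightarrow> affine_upd (fst (trans G l ! i)))
   \<and> (\<forall>l i. kind G l \<noteq> Deterministic \<and> i < length (trans G l) \<longrightarrow>
           fst (trans G l ! i) = (\<lambda>x r. x))
   \<and> kind G (out_loc G) = Deterministic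
   \<and> trans G (out_loc G) = [((\<lambda>x r. x), out_loc G)]
   \<and> (\<forall>l. kind G l = Probabilistic \<longrightarrow>
           (\<forall>i < length (trans G l). 0 \<le> tprob G l i)
         \<and> (\<Sum>i<length (trans G l). tprob G l i) = 1)
   \<and> (\<forall>l x. kind G l = Deterministic \<longrightarrow>
           (\<exists>!i. i < length (trans G l) \<and> psat (guard G l i) x)))"

type_synonym ('l, 'x) config = "'l \<times> (real^'x)"

definition dsupp :: "(real^'r::finite) measure \<Rightarrow> (real^'r) set" where
  "dsupp D = {r. \<forall>U. open U \<and> r \<in> U \<longrightarrow> emeasure D U > 0}"

definition gstep :: "('l::finite, 'x::finite, 'r::finite) sgs \<Rightarrow> (real^'r) measure
     \<Rightarrow> ('l, 'x) config \<Rightarrow> ('l, 'x) config \<Rightarrow> bool" where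
  "gstep G D c c' = (\<exists>i r. i < length (trans G (fst c)) \<and> r \<in> dsupp D
      \<and> (kind G (fst c) = Deterministic \<longrightarrow> psat (guard G (fst c) i) (snd c))
      \<and> (kind G (fst c) = Probabilistic \<longrightarrow> tprob G (fst c) i > 0)
      \<and> c' = (snd (trans G (fst c) ! i), fst (trans G (fst c) ! i) (snd c) r))"

definition is_path :: "('l::finite, 'x::finite, 'r::finite) sgs \<Rightarrow> (real^'r) measure
     \<Rightarrow> ('l, 'x) config list \<Rightarrow> bool" where
  "is_path G D h = (h \<noteq> [] \<and> hd h = (init_loc G, init_val G)
      \<and> (\<forall>i. Suc i < length h \<longrightarrow> gstep G D (h ! i) (h ! Suc i)))"

definition reachable :: "('l::finite, 'x::finite, 'r::finite) sgs \<Rightarrow> (real^'r) measure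
     \<Rightarrow> ('l, 'x) config \<Rightarrow> bool" where
  "reachable G D c = (\<exists>h. is_path G D h \<and> last h = c)"

definition inv_sat :: "('l \<Rightarrow> 'x::finite lassert list) \<Rightarrow> 'l \<Rightarrow> real^'x \<Rightarrow> bool" where
  "inv_sat I l x = (\<exists>A\<in>set (I l). asat A x)"

definition linear_invariant :: "('l::finite, 'x::finite, 'r::finite) sgs \<Rightarrow> (real^'r) measure
     \<Rightarrow> ('l \<Rightarrow> 'x lassert list) \<Rightarrow> bool" where
  "linear_invariant G D I = (\<forall>l x. reachable G D (l, x) \<longrightarrow> inv_sat I l x)"

definition det_idx :: "('l::finite, 'x::finite, 'r::finite) sgs \<Rightarrow> 'l \<Rightarrow> real^'x \<Rightarrow> nat" where
  "det_idx G l x = (SOME i. i < length (trans G l) \<and> psat (guard G l i) x)"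

definition pre_eta :: "('l::finite, 'x::finite, 'r::finite) sgs \<Rightarrow> (real^'r) measure
     \<Rightarrow> ('l \<Rightarrow> real^'x \<Rightarrow> real) \<Rightarrow> 'l \<Rightarrow> real^'x \<Rightarrow> real" where
  "pre_eta G D \<eta> l x = (case kind G l of
      Probabilistic \<Rightarrow> (\<Sum>i<length (trans G l). tprob G l i * \<eta> (snd (trans G l ! i)) x)
    | Demonic \<Rightarrow> Max {\<eta> (snd t) x | t. t \<in> set (trans G l)}
    | Angelic \<Rightarrow> Min {\<eta> (snd t) x | t. t \<in> set (trans G l)}
    | Deterministic \<Rightarrow>
        (let (f, l') = trans G l ! det_idx G l x
         in \<eta> l' (\<chi> j. \<integral>r. (f x r) $ j \<partial>D)))"

definition is_lrsm :: "('l::finite, 'x::finite, 'r::finite) sgs \<Rightarrow> (real^'r) measure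
     \<Rightarrow> ('l \<Rightarrow> 'x lassert list) \<Rightarrow> ('l \<Rightarrow> real^'x \<Rightarrow> real) \<Rightarrow> real \<Rightarrow> real \<Rightarrow> real \<Rightarrow> bool" where
  "is_lrsm G D I \<eta> \<epsilon> K K' = (\<epsilon> \<ge> 1 \<and> K \<le> -1 \<and> K' \<le> -1
     \<and> (\<forall>l. \<exists>a c. \<forall>x. \<eta> l x = a \<bullet> x + c)
     \<and> (\<forall>l x. l \<noteq> out_loc G \<and> inv_sat I l x \<longrightarrow> \<eta> l x \<ge> 0)
     \<and> (\<forall>x. inv_sat I (out_loc G) x \<longrightarrow> K' \<le> \<eta> (out_loc G) x \<and> \<eta> (out_loc G) x \<le> K)
     \<and> (\<forall>l x. l \<noteq> out_loc G \<and> inv_sat I l x \<longrightarrow> pre_eta G D \<eta> l x \<le> \<eta> l x - \<epsilon>))"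

text \<open>A scheduler maps a finite (chronological, nonempty) sequence of configurations to the
 index of a transition out of the location of its last configuration.\<close>
definition scheduler :: "('l::finite, 'x::finite, 'r::finite) sgs \<Rightarrow> lkind
     \<Rightarrow> (('l, 'x) config list \<Rightarrow> nat) \<Rightarrow> bool" where
  "scheduler G k s = (\<forall>h. h \<noteq> [] \<and> kind G (fst (last h)) = k \<longrightarrow>
       s h < length (trans G (fst (last h))))"

definition greedy :: "('l::finite, 'x::finite, 'r::finite) sgs \<Rightarrow> (real^'r) measure
     \<Rightarrow> ('l \<Rightarrow> real^'x \<Rightarrow> real) \<Rightarrow> (('l, 'x) config list \<Rightarrow> nat) \<Rightarrow> bool" where
  "greedy G D \<eta> \<sigma> = (\<forall>h l x. is_path G D h \<and> last h = (l, x) \<and> kind G l = Angelic \<longrightarrow>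
       \<eta> (snd (trans G l ! \<sigma> h)) x = Min {\<eta> (snd t) x | t. t \<in> set (trans G l)})"

text \<open>The randomness of a run: a stream of i.i.d. pairs (r, u), r ~ D the sample of the
 random variables and u uniform on [0,1] used to resolve probabilistic branching
 (transition 0 is taken iff u < tprob l 0).\<close>
definition step_space :: "(real^'r::finite) measure \<Rightarrow> ((real^'r) \<times> real) measure" where
  "step_space D = D \<Otimes>\<^sub>M uniform_measure lborel {0..1}"

definition run_space :: "(real^'r::finite) measure \<Rightarrow> ((real^'r) \<times> real) stream measure" where
  "run_space D = stream_space (step_space D)"

definition choice :: "('l::finite, 'x::finite, 'r::finite) sgs
     \<Rightarrow> (('l, 'x) config list \<Rightarrow> nat) \<Rightarrow> (('l, 'x) config list \<Rightarrow> nat)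
     \<Rightarrow> ('l, 'x) config list \<Rightarrow> real \<Rightarrow> nat" where
  "choice G \<sigma> \<pi> h u = (let (l, x) = last h in case kind G l of
       Angelic \<Rightarrow> \<sigma> h
     | Demonic \<Rightarrow> \<pi> h
     | Probabilistic \<Rightarrow> (if u < tprob G l 0 then 0 else length (trans G l) - 1)
     | Deterministic \<Rightarrow> det_idx G l x)"

text \<open>hist n = [c_1, ..., c_(n+1)].\<close>
fun hist :: "('l::finite, 'x::finite, 'r::finite) sgs
     \<Rightarrow> (('l, 'x) config list \<Rightarrow> nat) \<Rightarrow> (('l, 'x) config list \<Rightarrow> nat)
     \<Rightarrow> ((real^'r) \<times> real) stream \<Rightarrow> nat \<Rightarrow> ('l, 'x) config list" where
  "hist G \<sigma> \<pi> \<omega> 0 = [(init_loc G, init_val G)]"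
| "hist G \<sigma> \<pi> \<omega> (Suc n) =
     (let h = hist G \<sigma> \<pi> \<omega> n; (l, x) = last h; (r, u) = \<omega> !! n;
          (f, l') = trans G l ! choice G \<sigma> \<pi> h u
      in h @ [(l', f x r)])"

text \<open>The n-th configuration c_n of the run (n >= 1; c_0 is set to c_1 and never used).\<close>
definition cfg :: "('l::finite, 'x::finite, 'r::finite) sgs
     \<Rightarrow> (('l, 'x) config list \<Rightarrow> nat) \<Rightarrow> (('l, 'x) config list \<Rightarrow> nat)
     \<Rightarrow> ((real^'r) \<times> real) stream \<Rightarrow> nat \<Rightarrow> ('l, 'x) config" where
  "cfg G \<sigma> \<pi> \<omega> n = last (hist G \<sigma> \<pi> \<omega> (n - 1))"

definition term_time :: "('l::finite, 'x::finite, 'r::finite) sgs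
     \<Rightarrow> (('l, 'x) config list \<Rightarrow> nat) \<Rightarrow> (('l, 'x) config list \<Rightarrow> nat)
     \<Rightarrow> ((real^'r) \<times> real) stream \<Rightarrow> enat" where
  "term_time G \<sigma> \<pi> \<omega> = (if \<exists>n\<ge>1. fst (cfg G \<sigma> \<pi> \<omega> n) = out_loc G
      then enat (LEAST n. n \<ge> 1 \<and> fst (cfg G \<sigma> \<pi> \<omega> n) = out_loc G) else \<infinity>)"

end

theory Submission
  imports Defs
begin

text \<open>
  Along a run let \<open>X k = \<eta> (\<theta> k) (x k)\<close>. While the run has not terminated, condition (C4)
  makes \<open>X\<close> decrease in conditional expectation by at least \<open>\<epsilon>\<close> per step (at angelic
  locations because \<open>\<sigma>\<close> is greedy, at demonic ones because the maximum dominates every choice);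
  after termination the run stays put. Hence the increments
  \<open>Z k = X (k + 1) - X k + \<epsilon> \<cdot> [\<theta> k \<noteq> \<ell>\<^sub>o\<^sub>u\<^sub>t]\<close> are supermartingale differences with
  values in \<open>[a + \<epsilon>, b + \<epsilon>]\<close>, and the Azuma--Hoeffding inequality bounds the probability that
  their sum over \<open>N\<close> steps exceeds \<open>N \<epsilon> - W\<^sub>0\<close>. On \<open>T > N + 1\<close> the sum telescopes to
  \<open>X (N + 1) - W\<^sub>0 + N \<epsilon>\<close>, and \<open>X (N + 1) \<ge> 0\<close> by (C2), so it does exceed that bound.
\<close>

section \<open>Azuma--Hoeffding inequality on stream spaces\<close>

lemma measurable_shift_append:
  assumes "set p \<subseteq> space M"
  shows "(\<lambda>\<omega>. p @- \<omega>) \<in> stream_space M \<rightarrow>\<^sub>M stream_space M"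
  using assms
proof (induction p)
  case (Cons x p)
  then have "(\<lambda>\<omega>. x ## (p @- \<omega>)) \<in> stream_space M \<rightarrow>\<^sub>M stream_space M"
    by (intro measurable_Stream) auto
  then show ?case by simp
next
  case Nil
  have "(\<lambda>\<omega>. [] @- \<omega>) = (\<lambda>\<omega>. \<omega>)" by (rule ext) simp
  then show ?case by simp
qed

text \<open>
  Adaptedness and the supermartingale property are expressed through prefixes: \<open>Z k\<close> depends only
  on the first \<open>k + 1\<close> samples, and after any admissible history \<open>p\<close> the next increment has
  non-positive mean.
\<close>
locale bounded_supermartingale_increments = prob_space M
  for M :: "'a measure" +
  fixes Z :: "nat \<Rightarrow> 'a stream \<Rightarrow> real" and A :: "'a \<Rightarrow> bool" and \<alpha> \<beta> :: real
  assumes measurable_increment [measurable]: "Z k \<in> borel_measurable (stream_space M)"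
    and increment_prefix_determined: "k < length p \<Longrightarrow> Z k (p @- \<omega>) = Z k (p @- \<omega>')"
    and AE_admissible: "AE x in M. A x"
    and expectation_increment_nonpos:
      "list_all A p \<Longrightarrow> (\<integral>x. Z (length p) (p @- (x ## \<omega>)) \<partial>M) \<le> 0"
    and AE_increment_in_interval: "AE \<omega> in stream_space M. \<forall>k. Z k \<omega> \<in> {\<alpha>..\<beta>}"
begin

lemma measurable_prepend_sample:
  assumes "set p \<subseteq> space M" and "\<omega> \<in> space (stream_space M)"
  shows "(\<lambda>x. p @- (x ## \<omega>)) \<in> M \<rightarrow>\<^sub>M stream_space M"
  using measurable_shift_append[OF assms(1)] assms(2)
  by (auto intro!: measurable_compose[where g = "\<lambda>\<omega>. p @- \<omega>"] measurable_Stream)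

lemma nn_integral_exp_increment_le:
  assumes "0 < s" and p: "list_all A p" "set p \<subseteq> space M" and \<omega>: "\<omega> \<in> space (stream_space M)"
    and bounded: "AE x in M. Z (length p) (p @- (x ## \<omega>)) \<in> {\<alpha>..\<beta>}"
  shows "(\<integral>\<^sup>+x. ennreal (exp (s * Z (length p) (p @- (x ## \<omega>)))) \<partial>M) \<le> ennreal (exp (s\<^sup>2 * (\<beta> - \<alpha>)\<^sup>2 / 8))"
proof -
  define f where "f x = Z (length p) (p @- (x ## \<omega>))" for x
  have "f \<in> borel_measurable M"
    unfolding f_def by (rule measurable_compose[OF measurable_prepend_sample[OF p(2) \<omega>]]) simp
  then interpret interval_bounded_random_variable M f \<alpha> \<beta>
    using bounded by unfold_locales (simp_all add: f_def)
  have "expectation f \<le> 0"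
    unfolding f_def by (rule expectation_increment_nonpos[OF p(1)])
  then have "(\<integral>\<^sup>+x. ennreal (exp (s * f x)) \<partial>M) \<le> (\<integral>\<^sup>+x. ennreal (exp (s * (f x - expectation f))) \<partial>M)"
    using \<open>0 < s\<close> by (intro nn_integral_mono ennreal_leI) (simp add: algebra_simps mult_nonneg_nonpos)
  also have "\<dots> \<le> ennreal (exp (s\<^sup>2 * (\<beta> - \<alpha>)\<^sup>2 / 8))"
    by (rule Hoeffdings_lemma_nn_integral[OF \<open>0 < s\<close>])
  finally show ?thesis
    by (simp add: f_def)
qed

lemma nn_integral_exp_increment_sum_Suc:
  assumes p: "set p \<subseteq> space M" and \<omega>: "\<omega> \<in> space (stream_space M)"
  shows "(\<integral>\<^sup>+\<omega>'. ennreal (exp (s * (\<Sum>k<Suc N. Z (length p + k) (p @- \<omega>')))) \<partial>stream_space M) =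
    (\<integral>\<^sup>+x. ennreal (exp (s * Z (length p) (p @- (x ## \<omega>))))
       * (\<integral>\<^sup>+\<omega>'. ennreal (exp (s * (\<Sum>k<N. Z (length (p @ [x]) + k) ((p @ [x]) @- \<omega>')))) \<partial>stream_space M) \<partial>M)"
    (is "_ = ?rhs")
proof -
  have [measurable]: "(\<lambda>\<omega>. q @- \<omega>) \<in> stream_space M \<rightarrow>\<^sub>M stream_space M" if "set q \<subseteq> space M" for q
    using measurable_shift_append[OF that] .
  have split: "(\<Sum>k<Suc N. Z (length p + k) (p @- (x ## \<omega>'))) =
      Z (length p) (p @- (x ## \<omega>)) + (\<Sum>k<N. Z (length (p @ [x]) + k) ((p @ [x]) @- \<omega>'))" for x \<omega>'
    using increment_prefix_determined[of "length p" "p @ [x]" \<omega>' \<omega>]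
    unfolding sum.lessThan_Suc_shift by simp
  have "(\<integral>\<^sup>+\<omega>'. ennreal (exp (s * (\<Sum>k<Suc N. Z (length p + k) (p @- \<omega>')))) \<partial>stream_space M) =
      (\<integral>\<^sup>+x. (\<integral>\<^sup>+\<omega>'. ennreal (exp (s * (\<Sum>k<Suc N. Z (length p + k) (p @- (x ## \<omega>'))))) \<partial>stream_space M) \<partial>M)"
    using p by (intro nn_integral_stream_space) measurable
  also have "\<dots> = ?rhs"
  proof (rule nn_integral_cong)
    fix x assume "x \<in> space M"
    with p have px: "set (p @ [x]) \<subseteq> space M" by simp
    show "(\<integral>\<^sup>+\<omega>'. ennreal (exp (s * (\<Sum>k<Suc N. Z (length p + k) (p @- (x ## \<omega>'))))) \<partial>stream_space M) =
      ennreal (exp (s * Z (length p) (p @- (x ## \<omega>))))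
       * (\<integral>\<^sup>+\<omega>'. ennreal (exp (s * (\<Sum>k<N. Z (length (p @ [x]) + k) ((p @ [x]) @- \<omega>')))) \<partial>stream_space M)"
      unfolding split using px
      by (subst nn_integral_cmult[symmetric]) (simp_all add: distrib_left exp_add ennreal_mult)
  qed
  finally show ?thesis .
qed

lemma nn_integral_exp_increment_sum_prefix_le:
  assumes "0 < s" and "list_all A p" and "set p \<subseteq> space M"
    and "AE \<omega> in stream_space M. \<forall>k<N. Z (length p + k) (p @- \<omega>) \<in> {\<alpha>..\<beta>}"
  shows "(\<integral>\<^sup>+\<omega>. ennreal (exp (s * (\<Sum>k<N. Z (length p + k) (p @- \<omega>)))) \<partial>stream_space M)
      \<le> ennreal (exp (real N * (s\<^sup>2 * (\<beta> - \<alpha>)\<^sup>2 / 8)))"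
  using assms(2-)
proof (induction N arbitrary: p)
  case 0
  then show ?case
    using prob_space.emeasure_space_1[OF prob_space_stream_space] by simp
next
  case (Suc N)
  define C where "C = ennreal (exp (real N * (s\<^sup>2 * (\<beta> - \<alpha>)\<^sup>2 / 8)))"
  obtain \<omega> where \<omega>: "\<omega> \<in> space (stream_space M)"
    using prob_space.not_empty[OF prob_space_stream_space] by blast
  have [measurable]: "(\<lambda>\<omega>. p @- \<omega>) \<in> stream_space M \<rightarrow>\<^sub>M stream_space M"
    by (rule measurable_shift_append[OF Suc.prems(2)])
  have [measurable]: "(\<lambda>x. p @- (x ## \<omega>)) \<in> M \<rightarrow>\<^sub>M stream_space M"
    by (rule measurable_prepend_sample[OF Suc.prems(2) \<omega>])
  have bounded: "AE x in M. AE \<omega>' in stream_space M.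
      \<forall>k<Suc N. Z (length p + k) (p @- (x ## \<omega>')) \<in> {\<alpha>..\<beta>}"
    using Suc.prems(3) by (subst (asm) AE_stream_space) simp_all
  have first: "AE x in M. Z (length p) (p @- (x ## \<omega>)) \<in> {\<alpha>..\<beta>}"
    using bounded
  proof eventually_elim
    case (elim x)
    have "AE \<omega>' in stream_space M. Z (length p) (p @- (x ## \<omega>)) \<in> {\<alpha>..\<beta>}"
      using elim
    proof eventually_elim
      case (elim \<omega>')
      then show ?case
        using increment_prefix_determined[of "length p" "p @ [x]" \<omega>' \<omega>] by auto
    qed
    then show ?case
      using prob_space.AE_const[OF prob_space_stream_space] by simp
  qed
  have rest: "AE x in M. (\<integral>\<^sup>+\<omega>'. ennreal (exp (s * (\<Sum>k<N. Z (length (p @ [x]) + k) ((p @ [x]) @- \<omega>'))))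
      \<partial>stream_space M) \<le> C"
    using bounded AE_admissible AE_space
  proof eventually_elim
    case (elim x)
    have "AE \<omega>' in stream_space M. \<forall>k<N. Z (length (p @ [x]) + k) ((p @ [x]) @- \<omega>') \<in> {\<alpha>..\<beta>}"
      using elim(1) by (auto elim!: eventually_mono)
    then show ?case
      unfolding C_def using Suc.IH[of "p @ [x]"] Suc.prems elim by simp
  qed
  have "(\<integral>\<^sup>+\<omega>'. ennreal (exp (s * (\<Sum>k<Suc N. Z (length p + k) (p @- \<omega>')))) \<partial>stream_space M)
      \<le> (\<integral>\<^sup>+x. ennreal (exp (s * Z (length p) (p @- (x ## \<omega>)))) * C \<partial>M)"
    unfolding nn_integral_exp_increment_sum_Suc[OF Suc.prems(2) \<omega>]
    using rest by (intro nn_integral_mono_AE) (auto elim!: eventually_mono intro: mult_left_mono)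
  also have "\<dots> = (\<integral>\<^sup>+x. ennreal (exp (s * Z (length p) (p @- (x ## \<omega>)))) \<partial>M) * C"
    by (rule nn_integral_multc) simp
  also have "\<dots> \<le> ennreal (exp (s\<^sup>2 * (\<beta> - \<alpha>)\<^sup>2 / 8)) * C"
    using nn_integral_exp_increment_le[OF assms(1) Suc.prems(1,2) \<omega> first] by (rule mult_right_mono) simp
  also have "\<dots> = ennreal (exp (real (Suc N) * (s\<^sup>2 * (\<beta> - \<alpha>)\<^sup>2 / 8)))"
    unfolding C_def by (simp add: ennreal_mult[symmetric] exp_add[symmetric] algebra_simps)
  finally show ?case .
qed

lemma nn_integral_exp_increment_sum_le:
  assumes "0 < s"
  shows "(\<integral>\<^sup>+\<omega>. ennreal (exp (s * (\<Sum>k<N. Z k \<omega>))) \<partial>stream_space M)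
           \<le> ennreal (exp (real N * (s\<^sup>2 * (\<beta> - \<alpha>)\<^sup>2 / 8)))"
proof -
  have "AE \<omega> in stream_space M. \<forall>k<N. Z k \<omega> \<in> {\<alpha>..\<beta>}"
    using AE_increment_in_interval by (auto elim: eventually_mono)
  then show ?thesis
    using nn_integral_exp_increment_sum_prefix_le[OF assms, of "[]" N] by simp
qed

theorem Azuma_Hoeffding_ineq_ge:
  assumes "0 \<le> t"
  shows "measure (stream_space M) {\<omega> \<in> space (stream_space M). t \<le> (\<Sum>k<N. Z k \<omega>)}
           \<le> exp (- (2 * t\<^sup>2) / (real N * (\<beta> - \<alpha>)\<^sup>2))"
proof -
  interpret S: prob_space "stream_space M"
    by (rule prob_space_stream_space)
  define w where "w = real N * (\<beta> - \<alpha>)\<^sup>2"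
  show ?thesis
  proof (cases "t = 0 \<or> w = 0")
    case True
    then show ?thesis
      unfolding w_def[symmetric] using S.prob_le_1 by auto
  next
    case False
    with assms have "0 < t" "0 < w"
      by (auto simp: w_def)
    define s where "s = 4 * t / w"
    have "0 < s"
      using \<open>0 < t\<close> \<open>0 < w\<close> by (simp add: s_def)
    have "emeasure (stream_space M) {\<omega> \<in> space (stream_space M). t \<le> (\<Sum>k<N. Z k \<omega>)}
        \<le> ennreal (exp (- s * t)) * (\<integral>\<^sup>+\<omega>\<in>space (stream_space M). ennreal (exp (s * (\<Sum>k<N. Z k \<omega>))) \<partial>stream_space M)"
      using \<open>0 < s\<close> by (intro Chernoff_ineq_nn_integral_ge) simp_all
    also have "(\<integral>\<^sup>+\<omega>\<in>space (stream_space M). ennreal (exp (s * (\<Sum>k<N. Z k \<omega>))) \<partial>stream_space M)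
        = (\<integral>\<^sup>+\<omega>. ennreal (exp (s * (\<Sum>k<N. Z k \<omega>))) \<partial>stream_space M)"
      by (intro nn_integral_cong) simp
    also have "ennreal (exp (- s * t)) * \<dots> \<le> ennreal (exp (- s * t)) * ennreal (exp (real N * (s\<^sup>2 * (\<beta> - \<alpha>)\<^sup>2 / 8)))"
      using nn_integral_exp_increment_sum_le[OF \<open>0 < s\<close>] by (rule mult_left_mono) simp
    also have "\<dots> = ennreal (exp (- s * t + s\<^sup>2 * w / 8))"
      by (simp add: w_def ennreal_mult[symmetric] exp_add[symmetric] mult_ac)
    also have "- s * t + s\<^sup>2 * w / 8 = - (2 * t\<^sup>2) / w"
      using \<open>0 < w\<close> by (simp add: s_def field_simps power2_eq_square)
    finally show ?thesis
      by (simp add: S.emeasure_eq_measure ennreal_le_iff w_def)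
  qed
qed

end

section \<open>Support of the sample distribution and the step space\<close>

lemma closed_dsupp: "closed (dsupp D)"
proof -
  have "open (- dsupp D)"
  proof (subst open_subopen, intro ballI)
    fix r assume "r \<in> - dsupp D"
    then obtain V where V: "open V" "r \<in> V" "\<not> emeasure D V > 0"
      by (auto simp: dsupp_def)
    then have "V \<subseteq> - dsupp D"
      by (auto simp: dsupp_def)
    with V show "\<exists>T. open T \<and> r \<in> T \<and> T \<subseteq> - dsupp D"
      by blast
  qed
  then show ?thesis
    by (simp add: closed_def)
qed

text \<open>The complement of the support is covered by the null sets of a countable basis.\<close>
lemma AE_in_dsupp:
  fixes D :: "(real^'r::finite) measure"
  assumes sets: "sets D = sets borel"
  shows "AE r in D. r \<in> dsupp D"
proof -
  obtain \<B> :: "(real^'r) set set" where \<B>: "countable \<B>" "topological_basis \<B>"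
    using ex_countable_basis by blast
  have open_\<B>: "open b" if "b \<in> \<B>" for b
    using \<B>(2) that by (simp add: topological_basis_open)
  let ?N = "\<Union>b\<in>{b \<in> \<B>. emeasure D b = 0}. b"
  have "?N \<in> null_sets D"
    using \<B>(1) open_\<B> sets by (intro null_sets_UN') (auto simp: null_sets_def)
  moreover have "{r \<in> space D. r \<notin> dsupp D} \<subseteq> ?N"
  proof
    fix r assume "r \<in> {r \<in> space D. r \<notin> dsupp D}"
    then obtain V where V: "open V" "r \<in> V" "\<not> emeasure D V > 0"
      by (auto simp: dsupp_def)
    obtain b where b: "b \<in> \<B>" "r \<in> b" "b \<subseteq> V"
      using topological_basisE[OF \<B>(2) V(1,2)] by blast
    have "emeasure D b \<le> emeasure D V"
      using b open_\<B> V(1) sets by (intro emeasure_mono) auto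
    with V(3) b show "r \<in> ?N"
      by auto
  qed
  ultimately show ?thesis
    by (rule AE_I')
qed

lemma distr_pair_snd:
  assumes "prob_space M1" and "sigma_finite_measure M2"
  shows "distr (M1 \<Otimes>\<^sub>M M2) M2 snd = M2"
proof (rule measure_eqI)
  fix A assume "A \<in> sets (distr (M1 \<Otimes>\<^sub>M M2) M2 snd)"
  then have A: "A \<in> sets M2"
    by simp
  have "emeasure (distr (M1 \<Otimes>\<^sub>M M2) M2 snd) A = emeasure (M1 \<Otimes>\<^sub>M M2) (space M1 \<times> A)"
    using A by (subst emeasure_distr)
      (auto simp: space_pair_measure intro!: arg_cong2[where f = emeasure] dest: sets.sets_into_space)
  also have "\<dots> = emeasure M1 (space M1) * emeasure M2 A"
    using A by (intro sigma_finite_measure.emeasure_pair_measure_Times assms(2)) simp_all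
  finally show "emeasure (distr (M1 \<Otimes>\<^sub>M M2) M2 snd) A = emeasure M2 A"
    by (simp add: prob_space.emeasure_space_1[OF assms(1)])
qed simp

lemma integrable_integral_distr_eq:
  fixes g :: "'b \<Rightarrow> real"
  assumes f: "f \<in> M \<rightarrow>\<^sub>M N" and distr: "distr M N f = N" and g: "integrable N g"
  shows "integrable M (\<lambda>x. g (f x))" and "(\<integral>x. g (f x) \<partial>M) = (\<integral>y. g y \<partial>N)"
proof -
  have g_meas: "g \<in> borel_measurable N"
    using g by simp
  show "integrable M (\<lambda>x. g (f x))"
    using integrable_distr_eq[OF f g_meas] g by (simp add: distr)
  show "(\<integral>x. g (f x) \<partial>M) = (\<integral>y. g y \<partial>N)"
    using integral_distr[OF f g_meas] by (simp add: distr)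
qed

lemma integrable_integral_inner_plus_const:
  fixes F :: "'a \<Rightarrow> real^'n"
  assumes "prob_space M" and F: "\<And>j. integrable M (\<lambda>r. F r $ j)"
  shows "integrable M (\<lambda>r. a \<bullet> F r + c)"
    and "(\<integral>r. a \<bullet> F r + c \<partial>M) = a \<bullet> (\<chi> j. \<integral>r. F r $ j \<partial>M) + c"
proof -
  interpret prob_space M by fact
  have inner: "a \<bullet> F r = (\<Sum>j\<in>UNIV. a $ j * F r $ j)" for r
    by (simp add: inner_vec_def)
  have "integrable M (\<lambda>r. \<Sum>j\<in>UNIV. a $ j * F r $ j)"
    using F by auto
  then show "integrable M (\<lambda>r. a \<bullet> F r + c)"
    unfolding inner by simp
  have "(\<integral>r. a \<bullet> F r + c \<partial>M) = (\<Sum>j\<in>UNIV. a $ j * (\<integral>r. F r $ j \<partial>M)) + c"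
    unfolding inner using F by (simp add: integral_sum prob_space)
  then show "(\<integral>r. a \<bullet> F r + c \<partial>M) = a \<bullet> (\<chi> j. \<integral>r. F r $ j \<partial>M) + c"
    by (simp add: inner_vec_def)
qed

lemma integrable_integral_uniform_threshold:
  fixes p A B :: real
  assumes "0 \<le> p" and "p \<le> 1"
  shows "integrable (uniform_measure lborel {0..1}) (\<lambda>u. B + (A - B) * indicator {..<p} u)"
    and "(\<integral>u. B + (A - B) * indicator {..<p} u \<partial>uniform_measure lborel {0..1}) = p * A + (1 - p) * B"
proof -
  interpret U: prob_space "uniform_measure lborel {0..1::real}"
    by (rule prob_space_uniform_measure) auto
  have "emeasure (uniform_measure lborel {0..1}) {..<p} < \<top>"
    by (metis U.emeasure_finite infinity_ennreal_def less_top)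
  then have indicator: "integrable (uniform_measure lborel {0..1}) (indicator {..<p} :: real \<Rightarrow> real)"
    by (intro integrable_real_indicator) simp_all
  then show "integrable (uniform_measure lborel {0..1}) (\<lambda>u. B + (A - B) * indicator {..<p} u)"
    by simp
  have "measure (uniform_measure lborel {0..1}) {..<p} = measure lborel ({0..1} \<inter> {..<p}) / measure lborel {0..1::real}"
    by (subst measure_uniform_measure) auto
  also have "{0..1} \<inter> {..<p} = {0..<p}"
    using assms by auto
  finally have "measure (uniform_measure lborel {0..1}) {..<p} = p"
    using assms by simp
  with indicator show "(\<integral>u. B + (A - B) * indicator {..<p} u \<partial>uniform_measure lborel {0..1}) = p * A + (1 - p) * B"
    by (simp add: U.prob_space algebra_simps)
qed

lemma integrable_affine_update:
  assumes "affine_upd f" and "rv_dist D"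
  shows "integrable D (\<lambda>r. f y r $ j)"
proof -
  obtain A B c where f: "\<And>x r. f x r = A *v x + B *v r + c"
    using assms(1) unfolding affine_upd_def by blast
  interpret prob_space D
    using assms(2) by (simp add: rv_dist_def)
  have "f y r $ j = (A *v y) $ j + (\<Sum>i\<in>UNIV. B $ j $ i * r $ i) + c $ j" for r
    by (simp add: f matrix_vector_mult_def)
  then show ?thesis
    using assms(2) by (simp add: rv_dist_def)
qed

lemma prob_space_step_space: "rv_dist D \<Longrightarrow> prob_space (step_space D)"
  unfolding rv_dist_def step_space_def
  by (auto intro!: prob_space_pair prob_space_uniform_measure)

lemma space_step_space: "rv_dist D \<Longrightarrow> space (step_space D) = UNIV"
  unfolding rv_dist_def step_space_def
  by (auto simp: space_pair_measure dest: sets_eq_imp_space_eq)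

lemma space_run_space: "rv_dist D \<Longrightarrow> space (run_space D) = UNIV"
  by (simp add: run_space_def space_stream_space space_step_space)

section \<open>Runs of the game structure\<close>

locale game_run =
  fixes G :: "('l::finite, 'x::finite, 'r::finite) sgs"
    and D :: "(real^'r) measure"
    and \<sigma> \<pi> :: "('l, 'x) config list \<Rightarrow> nat"
  assumes wf_sgs: "wf_sgs G" and rv_dist: "rv_dist D"
    and angelic_scheduler: "scheduler G Angelic \<sigma>"
    and demonic_scheduler: "scheduler G Demonic \<pi>"
begin

sublocale sample: prob_space D
  using rv_dist by (simp add: rv_dist_def)

sublocale step: prob_space "step_space D"
  by (rule prob_space_step_space[OF rv_dist])

sublocale run: prob_space "run_space D"
  unfolding run_space_def by (rule step.prob_space_stream_space)

lemma sets_sample: "sets D = sets borel"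
  using rv_dist by (simp add: rv_dist_def)

lemma distr_step_space_fst: "distr (step_space D) D fst = D"
  unfolding step_space_def by (rule prob_space.distr_pair_fst) (auto intro: prob_space_uniform_measure)

lemma distr_step_space_snd:
  "distr (step_space D) (uniform_measure lborel {0..1}) snd = uniform_measure lborel {0..1::real}"
  unfolding step_space_def
  by (intro distr_pair_snd sample.prob_space_axioms prob_space_imp_sigma_finite prob_space_uniform_measure) auto

lemma integrable_integral_step_space_fst:
  fixes g :: "real^'r \<Rightarrow> real"
  assumes "integrable D g"
  shows "integrable (step_space D) (\<lambda>s. g (fst s))" and "(\<integral>s. g (fst s) \<partial>step_space D) = (\<integral>r. g r \<partial>D)"
  using integrable_integral_distr_eq[OF _ distr_step_space_fst assms] by (simp_all add: step_space_def)

lemma integrable_integral_step_space_snd: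
  fixes g :: "real \<Rightarrow> real"
  assumes "integrable (uniform_measure lborel {0..1}) g"
  shows "integrable (step_space D) (\<lambda>s. g (snd s))"
    and "(\<integral>s. g (snd s) \<partial>step_space D) = (\<integral>u. g u \<partial>uniform_measure lborel {0..1})"
  using integrable_integral_distr_eq[OF _ distr_step_space_snd assms] by (simp_all add: step_space_def)

lemma length_trans: "1 \<le> length (trans G l)" "length (trans G l) \<le> 2"
  using wf_sgs by (auto simp: wf_sgs_def)

lemma trans_identity_update:
  "kind G l \<noteq> Deterministic \<Longrightarrow> i < length (trans G l) \<Longrightarrow> fst (trans G l ! i) = (\<lambda>x r. x)"
  using wf_sgs by (auto simp: wf_sgs_def)

lemma trans_out_loc: "trans G (out_loc G) = [((\<lambda>x r. x), out_loc G)]"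
  using wf_sgs by (auto simp: wf_sgs_def)

lemma det_idx:
  assumes "kind G l = Deterministic"
  shows "det_idx G l x < length (trans G l) \<and> psat (guard G l (det_idx G l x)) x"
proof -
  have "\<exists>!i. i < length (trans G l) \<and> psat (guard G l i) x"
    using wf_sgs assms by (simp add: wf_sgs_def)
  then show ?thesis
    unfolding det_idx_def by (rule someI_ex[OF ex1_implies_ex])
qed

definition extend_hist :: "('l, 'x) config list \<Rightarrow> (real^'r) \<times> real \<Rightarrow> ('l, 'x) config list" where
  "extend_hist h s = (let (l, y) = last h; (r, u) = s; (f, l') = trans G l ! choice G \<sigma> \<pi> h u
      in h @ [(l', f y r)])"

lemma hist_Suc_extend_hist: "hist G \<sigma> \<pi> \<omega> (Suc n) = extend_hist (hist G \<sigma> \<pi> \<omega> n) (\<omega> !! n)"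
  by (simp add: extend_hist_def Let_def split: prod.splits)

lemma extend_hist_snoc_last: "extend_hist h s = h @ [last (extend_hist h s)]"
  by (simp add: extend_hist_def Let_def split: prod.splits)

lemma last_extend_hist:
  assumes "last h = (l, y)"
  shows "last (extend_hist h (r, u)) =
    (snd (trans G l ! choice G \<sigma> \<pi> h u), fst (trans G l ! choice G \<sigma> \<pi> h u) y r)"
  by (simp add: extend_hist_def assms Let_def split: prod.splits)

lemma length_hist: "length (hist G \<sigma> \<pi> \<omega> n) = Suc n"
  by (induction n) (simp_all add: hist_Suc_extend_hist extend_hist_def Let_def split: prod.splits)

lemma hist_shift_append_eq: "n \<le> length p \<Longrightarrow> hist G \<sigma> \<pi> (p @- \<omega>) n = hist G \<sigma> \<pi> (p @- \<omega>') n"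
  by (induction n) (simp_all add: hist_Suc_extend_hist)

lemma cfg_Suc: "cfg G \<sigma> \<pi> \<omega> (Suc n) = last (hist G \<sigma> \<pi> \<omega> n)"
  by (simp add: cfg_def)

lemma choice_less_length:
  "h \<noteq> [] \<Longrightarrow> last h = (l, y) \<Longrightarrow> choice G \<sigma> \<pi> h u < length (trans G l)"
  using angelic_scheduler demonic_scheduler length_trans[of l] det_idx[of l y]
  by (auto simp: choice_def scheduler_def split: lkind.splits)

lemma last_extend_hist_out_loc:
  assumes "h \<noteq> []" and "fst (last h) = out_loc G"
  shows "last (extend_hist h s) = last h"
proof -
  obtain y where h: "last h = (out_loc G, y)"
    using assms(2) by (cases "last h") auto
  have "choice G \<sigma> \<pi> h (snd s) = 0"
    using choice_less_length[OF assms(1) h] by (simp add: trans_out_loc)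
  then show ?thesis
    using last_extend_hist[OF h, of "fst s" "snd s"] h by (simp add: trans_out_loc)
qed

text \<open>Along admissible samples every history is a path of the game, so the invariant applies to it.\<close>
definition admissible_sample :: "(real^'r) \<times> real \<Rightarrow> bool" where
  "admissible_sample s \<longleftrightarrow> fst s \<in> dsupp D \<and> snd s \<in> {0..<1}"

lemma sets_dsupp: "dsupp D \<in> sets D"
  by (simp add: sets_sample borel_closed[OF closed_dsupp])

lemma measurable_admissible_sample: "Measurable.pred (step_space D) admissible_sample"
proof -
  have [measurable]: "dsupp D \<in> sets D"
    by (rule sets_dsupp)
  show ?thesis
    unfolding admissible_sample_def step_space_def by measurable
qed

lemma AE_admissible_sample: "AE s in step_space D. admissible_sample s"
proof -
  let ?U = "uniform_measure lborel {0..1::real}"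
  have fst: "fst \<in> step_space D \<rightarrow>\<^sub>M D" and snd: "snd \<in> step_space D \<rightarrow>\<^sub>M ?U"
    unfolding step_space_def by simp_all
  have "AE r in distr (step_space D) D fst. r \<in> dsupp D"
    unfolding distr_step_space_fst by (rule AE_in_dsupp[OF sets_sample])
  then have "AE s in step_space D. fst s \<in> dsupp D"
    by (subst (asm) AE_distr_iff[OF fst])
      (use sets_dsupp in \<open>auto simp: sets_eq_imp_space_eq[OF sets_sample]\<close>)
  moreover have "AE u in distr (step_space D) ?U snd. u \<in> {0..<1}"
    unfolding distr_step_space_snd by (intro AE_uniform_measureI eventually_mono[OF AE_lborel_singleton[of 1]]) auto
  then have "AE s in step_space D. snd s \<in> {0..<1}"
    by (subst (asm) AE_distr_iff[OF snd]) auto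
  ultimately show ?thesis
    by eventually_elim (simp add: admissible_sample_def)
qed

lemma sum_tprob:
  "kind G l = Probabilistic \<Longrightarrow> (\<Sum>i<length (trans G l). tprob G l i) = 1"
  using wf_sgs by (simp add: wf_sgs_def)

lemma tprob_choice_pos:
  assumes h: "h \<noteq> []" "last h = (l, y)" and l: "kind G l = Probabilistic" and u: "u \<in> {0..<1}"
  shows "0 < tprob G l (choice G \<sigma> \<pi> h u)"
proof (cases "u < tprob G l 0")
  case True
  then show ?thesis
    using h l u by (auto simp: choice_def)
next
  case False
  consider "length (trans G l) = 1" | "length (trans G l) = 2"
    using length_trans[of l] by linarith
  then show ?thesis
  proof cases
    case 1
    then show ?thesis
      using sum_tprob[OF l] False u by simp
  next
    case 2
    then have "tprob G l 0 + tprob G l 1 = 1"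
      using sum_tprob[OF l] by (simp add: numeral_2_eq_2)
    then show ?thesis
      using h l False u 2 by (auto simp: choice_def)
  qed
qed

lemma gstep_extend_hist:
  assumes h: "h \<noteq> []" and s: "admissible_sample s"
  shows "gstep G D (last h) (last (extend_hist h s))"
proof -
  obtain l y where ly: "last h = (l, y)"
    by (cases "last h")
  obtain r u where s_eq: "s = (r, u)"
    by (cases s)
  define i where "i = choice G \<sigma> \<pi> h u"
  have "i < length (trans G l)"
    unfolding i_def by (rule choice_less_length[OF h ly])
  moreover have "kind G l = Deterministic \<longrightarrow> psat (guard G l i) y"
    using det_idx[of l y] by (auto simp: i_def choice_def ly)
  moreover have "kind G l = Probabilistic \<longrightarrow> 0 < tprob G l i"
    using tprob_choice_pos[OF h ly] s by (auto simp: i_def s_eq admissible_sample_def)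
  ultimately show ?thesis
    using s unfolding gstep_def ly last_extend_hist[OF ly] s_eq i_def[symmetric]
    by (auto simp: admissible_sample_def)
qed

lemma is_path_hist:
  assumes "\<forall>k<n. admissible_sample (\<omega> !! k)"
  shows "is_path G D (hist G \<sigma> \<pi> \<omega> n)"
  using assms
proof (induction n)
  case 0
  then show ?case
    by (simp add: is_path_def)
next
  case (Suc n)
  let ?h = "hist G \<sigma> \<pi> \<omega> n"
  define c where "c = last (extend_hist ?h (\<omega> !! n))"
  have extend: "extend_hist ?h (\<omega> !! n) = ?h @ [c]"
    unfolding c_def by (rule extend_hist_snoc_last)
  have path: "is_path G D ?h"
    using Suc by simp
  then have "?h \<noteq> []"
    by (simp add: is_path_def)
  then have step: "gstep G D (last ?h) c"
    unfolding c_def using Suc.prems by (intro gstep_extend_hist) simp_all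
  show ?case
    unfolding hist_Suc_extend_hist extend is_path_def
  proof (intro conjI allI impI)
    show "hd (?h @ [c]) = (init_loc G, init_val G)"
      using path \<open>?h \<noteq> []\<close> by (simp add: is_path_def)
    fix i assume i: "Suc i < length (?h @ [c])"
    show "gstep G D ((?h @ [c]) ! i) ((?h @ [c]) ! Suc i)"
    proof (cases "Suc i < length ?h")
      case True
      then show ?thesis
        using path by (simp add: nth_append is_path_def)
    next
      case False
      with i have "i = n"
        by (simp add: length_hist)
      then show ?thesis
        using step \<open>?h \<noteq> []\<close> by (simp add: nth_append length_hist last_conv_nth)
    qed
  qed simp
qed

lemma AE_is_path_hist: "AE \<omega> in run_space D. \<forall>n. is_path G D (hist G \<sigma> \<pi> \<omega> n)"
proof -
  have "AE \<omega> in run_space D. stream_all admissible_sample \<omega>"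
    unfolding run_space_def
    by (rule step.AE_stream_all[OF measurable_admissible_sample AE_admissible_sample])
  then show ?thesis
    by (rule eventually_mono) (simp add: stream_all_def is_path_hist)
qed

end

lemma cfg_not_out_loc_before_term_time:
  assumes "ereal (real n) < ereal_of_enat (term_time G \<sigma> \<pi> \<omega>)" and "1 \<le> m" and "m \<le> n"
  shows "fst (cfg G \<sigma> \<pi> \<omega> m) \<noteq> out_loc G"
proof
  assume out: "fst (cfg G \<sigma> \<pi> \<omega> m) = out_loc G"
  with assms(2) have "term_time G \<sigma> \<pi> \<omega> = enat (LEAST n. 1 \<le> n \<and> fst (cfg G \<sigma> \<pi> \<omega> n) = out_loc G)"
    by (auto simp: term_time_def)
  moreover have "(LEAST n. 1 \<le> n \<and> fst (cfg G \<sigma> \<pi> \<omega> n) = out_loc G) \<le> m"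
    using assms(2) out by (intro Least_le) simp
  ultimately show False
    using assms(1,3) by simp
qed

section \<open>The ranking supermartingale along a run\<close>

locale lrsm_run = game_run G D \<sigma> \<pi>
  for G :: "('l::finite, 'x::finite, 'r::finite) sgs" and D \<sigma> \<pi> +
  fixes I :: "'l \<Rightarrow> 'x lassert list"
    and \<eta> :: "'l \<Rightarrow> real^'x \<Rightarrow> real"
    and \<epsilon> K K' :: real
  assumes linear_invariant: "linear_invariant G D I"
    and lrsm: "is_lrsm G D I \<eta> \<epsilon> K K'"
    and greedy: "greedy G D \<eta> \<sigma>"
    and measurable_cfg: "(\<lambda>\<omega>. cfg G \<sigma> \<pi> \<omega> k) \<in> run_space D \<rightarrow>\<^sub>M count_space UNIV \<Otimes>\<^sub>M borel"
begin

lemma epsilon_ge_1: "1 \<le> \<epsilon>"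
  using lrsm by (simp add: is_lrsm_def)

lemma eta_affine: "\<exists>a c. \<forall>x. \<eta> l x = a \<bullet> x + c"
  using lrsm by (simp add: is_lrsm_def)

lemma eta_nonneg: "l \<noteq> out_loc G \<Longrightarrow> inv_sat I l x \<Longrightarrow> 0 \<le> \<eta> l x"
  using lrsm by (simp add: is_lrsm_def)

lemma pre_eta_le: "l \<noteq> out_loc G \<Longrightarrow> inv_sat I l x \<Longrightarrow> pre_eta G D \<eta> l x \<le> \<eta> l x - \<epsilon>"
  using lrsm by (simp add: is_lrsm_def)

lemma inv_sat_last_path: "is_path G D h \<Longrightarrow> last h = (l, y) \<Longrightarrow> inv_sat I l y"
  using linear_invariant unfolding linear_invariant_def reachable_def by blast

definition eta_cfg :: "('l, 'x) config \<Rightarrow> real" where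
  "eta_cfg c = \<eta> (fst c) (snd c)"

lemma eta_extend_hist_nondeterministic:
  assumes path: "is_path G D h" and ly: "last h = (l, y)" and kind: "kind G l \<in> {Angelic, Demonic}"
  obtains v where "\<And>s. eta_cfg (last (extend_hist h s)) = v" and "v \<le> pre_eta G D \<eta> l y"
proof -
  define i where "i = (if kind G l = Angelic then \<sigma> h else \<pi> h)"
  have h: "h \<noteq> []"
    using path by (simp add: is_path_def)
  have choice: "choice G \<sigma> \<pi> h u = i" for u
    using kind ly by (auto simp: choice_def i_def)
  have i_less: "i < length (trans G l)"
    using choice_less_length[OF h ly, of 0] by (simp add: choice)
  then have "fst (trans G l ! i) = (\<lambda>x r. x)"
    using trans_identity_update[of l i] kind by auto
  then have eta_next: "eta_cfg (last (extend_hist h s)) = \<eta> (snd (trans G l ! i)) y" for s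
    using last_extend_hist[OF ly, of "fst s" "snd s"] by (simp add: eta_cfg_def choice)
  have finite_values: "finite {\<eta> (snd t) y | t. t \<in> set (trans G l)}"
    by (rule finite_subset[of _ "(\<lambda>t. \<eta> (snd t) y) ` set (trans G l)"]) force+
  have "\<eta> (snd (trans G l ! i)) y \<le> pre_eta G D \<eta> l y"
  proof (cases "kind G l")
    case Angelic
    then show ?thesis
      using greedy path ly by (simp add: greedy_def pre_eta_def i_def)
  next
    case Demonic
    then have "\<eta> (snd (trans G l ! i)) y \<le> Max {\<eta> (snd t) y | t. t \<in> set (trans G l)}"
      using nth_mem[OF i_less] by (intro Max_ge[OF finite_values]) blast
    with Demonic show ?thesis
      by (simp add: pre_eta_def)
  qed (use kind in auto)
  with eta_next show ?thesis
    by (rule that)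
qed

lemma eta_extend_hist_probabilistic:
  assumes h: "h \<noteq> []" and ly: "last h = (l, y)" and kind: "kind G l = Probabilistic"
  shows "integrable (step_space D) (\<lambda>s. eta_cfg (last (extend_hist h s)))"
    and "(\<integral>s. eta_cfg (last (extend_hist h s)) \<partial>step_space D) = pre_eta G D \<eta> l y"
proof -
  define n where "n = length (trans G l)"
  define p where "p = tprob G l 0"
  define A where "A = \<eta> (snd (trans G l ! 0)) y"
  define B where "B = \<eta> (snd (trans G l ! (n - 1))) y"
  have n: "n = 1 \<or> n = 2"
    using length_trans[of l] by (auto simp: n_def)
  have sum: "(\<Sum>i<n. tprob G l i) = 1"
    using sum_tprob[OF kind] by (simp add: n_def)
  have nonneg: "0 \<le> tprob G l i" if "i < n" for i
    using wf_sgs kind that by (simp add: wf_sgs_def n_def)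
  have p: "0 \<le> p" "p \<le> 1"
    using n sum nonneg[of 0] nonneg[of 1] by (auto simp: p_def numeral_2_eq_2)
  have pre_sum: "pre_eta G D \<eta> l y = (\<Sum>i<n. tprob G l i * \<eta> (snd (trans G l ! i)) y)"
    using kind by (simp add: pre_eta_def n_def)
  from n have pre: "pre_eta G D \<eta> l y = p * A + (1 - p) * B"
  proof
    assume "n = 1"
    then show ?thesis
      using sum pre_sum by (simp add: p_def A_def B_def)
  next
    assume "n = 2"
    moreover from this have "tprob G l 1 = 1 - p"
      using sum by (simp add: p_def numeral_2_eq_2)
    ultimately show ?thesis
      using pre_sum by (simp add: p_def A_def B_def numeral_2_eq_2)
  qed
  have eta_next: "eta_cfg (last (extend_hist h s)) = B + (A - B) * indicator {..<p} (snd s)" for s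
    using last_extend_hist[OF ly, of "fst s" "snd s"] choice_less_length[OF h ly, of "snd s"]
      trans_identity_update[of l] kind ly
    by (auto simp: eta_cfg_def choice_def A_def B_def p_def n_def)
  note uniform = integrable_integral_uniform_threshold[OF p, of B A]
  show "integrable (step_space D) (\<lambda>s. eta_cfg (last (extend_hist h s)))"
    unfolding eta_next by (rule integrable_integral_step_space_snd(1)[OF uniform(1)])
  show "(\<integral>s. eta_cfg (last (extend_hist h s)) \<partial>step_space D) = pre_eta G D \<eta> l y"
    unfolding eta_next pre integrable_integral_step_space_snd(2)[OF uniform(1)] by (rule uniform(2))
qed

lemma eta_extend_hist_deterministic:
  assumes ly: "last h = (l, y)" and kind: "kind G l = Deterministic"
  shows "integrable (step_space D) (\<lambda>s. eta_cfg (last (extend_hist h s)))"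
    and "(\<integral>s. eta_cfg (last (extend_hist h s)) \<partial>step_space D) = pre_eta G D \<eta> l y"
proof -
  define i where "i = det_idx G l y"
  obtain f l' where fl: "trans G l ! i = (f, l')"
    by (cases "trans G l ! i")
  have "affine_upd f"
    using wf_sgs det_idx[OF kind, of y] fl unfolding wf_sgs_def i_def by (metis fst_conv)
  then have coordinates: "integrable D (\<lambda>r. f y r $ j)" for j
    using rv_dist by (simp add: integrable_affine_update)
  obtain a c where ac: "\<And>z. \<eta> l' z = a \<bullet> z + c"
    using eta_affine[of l'] by blast
  have eta_next: "eta_cfg (last (extend_hist h s)) = a \<bullet> f y (fst s) + c" for s
    using last_extend_hist[OF ly, of "fst s" "snd s"] kind ly
    by (simp add: eta_cfg_def choice_def i_def[symmetric] fl ac)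
  have pre: "pre_eta G D \<eta> l y = a \<bullet> (\<chi> j. \<integral>r. f y r $ j \<partial>D) + c"
    using kind by (simp add: pre_eta_def fl ac i_def[symmetric])
  note affine = integrable_integral_inner_plus_const[OF sample.prob_space_axioms coordinates, of a c]
  show "integrable (step_space D) (\<lambda>s. eta_cfg (last (extend_hist h s)))"
    unfolding eta_next by (rule integrable_integral_step_space_fst(1)[OF affine(1)])
  show "(\<integral>s. eta_cfg (last (extend_hist h s)) \<partial>step_space D) = pre_eta G D \<eta> l y"
    unfolding eta_next pre integrable_integral_step_space_fst(2)[OF affine(1)] by (rule affine(2))
qed

lemma integral_eta_extend_hist_le:
  assumes path: "is_path G D h" and ly: "last h = (l, y)" and l: "l \<noteq> out_loc G"
  shows "integrable (step_space D) (\<lambda>s. eta_cfg (last (extend_hist h s)))"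
    and "(\<integral>s. eta_cfg (last (extend_hist h s)) \<partial>step_space D) \<le> \<eta> l y - \<epsilon>"
proof -
  have h: "h \<noteq> []"
    using path by (simp add: is_path_def)
  have "integrable (step_space D) (\<lambda>s. eta_cfg (last (extend_hist h s)))
      \<and> (\<integral>s. eta_cfg (last (extend_hist h s)) \<partial>step_space D) \<le> pre_eta G D \<eta> l y"
  proof -
    consider "kind G l \<in> {Angelic, Demonic}" | "kind G l = Probabilistic" | "kind G l = Deterministic"
      by (cases "kind G l") auto
    then show ?thesis
    proof cases
      case 1
      obtain v where "\<And>s. eta_cfg (last (extend_hist h s)) = v" and "v \<le> pre_eta G D \<eta> l y"
        using eta_extend_hist_nondeterministic[OF path ly 1] by blast
      then show ?thesis
        by (simp add: step.prob_space)
    next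
      case 2
      then show ?thesis
        using eta_extend_hist_probabilistic[OF h ly] by simp
    next
      case 3
      then show ?thesis
        using eta_extend_hist_deterministic[OF ly] by simp
    qed
  qed
  with pre_eta_le[OF l inv_sat_last_path[OF path ly]]
  show "integrable (step_space D) (\<lambda>s. eta_cfg (last (extend_hist h s)))"
    and "(\<integral>s. eta_cfg (last (extend_hist h s)) \<partial>step_space D) \<le> \<eta> l y - \<epsilon>"
    by auto
qed

lemma measurable_eta_cfg: "(\<lambda>\<omega>. eta_cfg (cfg G \<sigma> \<pi> \<omega> k)) \<in> borel_measurable (run_space D)"
proof -
  have loc: "(\<lambda>\<omega>. fst (cfg G \<sigma> \<pi> \<omega> k)) \<in> run_space D \<rightarrow>\<^sub>M count_space UNIV"
    and val: "(\<lambda>\<omega>. snd (cfg G \<sigma> \<pi> \<omega> k)) \<in> borel_measurable (run_space D)"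
    using measurable_cfg[of k] by (auto intro: measurable_compose)
  have "(\<lambda>\<omega>. \<eta> l (snd (cfg G \<sigma> \<pi> \<omega> k))) \<in> borel_measurable (run_space D)" for l
  proof -
    obtain a c where "\<And>x. \<eta> l x = a \<bullet> x + c"
      using eta_affine[of l] by blast
    moreover have "(\<lambda>x::real^'x. a \<bullet> x + c) \<in> borel_measurable borel"
      by (intro borel_measurable_continuous_onI continuous_intros)
    ultimately show ?thesis
      using measurable_compose[OF val, of "\<lambda>x. a \<bullet> x + c"] by simp
  qed
  moreover have "countable (UNIV :: 'l set)"
    by (simp add: countable_finite)
  ultimately show ?thesis
    unfolding eta_cfg_def by (rule measurable_compose_countable'[OF _ loc])
qed

text \<open>Configurations are numbered from 1, so \<open>increment k\<close> is the step from \<open>c\<^sub>k\<^sub>+\<^sub>1\<close> to \<open>c\<^sub>k\<^sub>+\<^sub>2\<close>.\<close>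
definition increment :: "nat \<Rightarrow> ((real^'r) \<times> real) stream \<Rightarrow> real" where
  "increment k \<omega> = eta_cfg (cfg G \<sigma> \<pi> \<omega> (Suc (Suc k))) - eta_cfg (cfg G \<sigma> \<pi> \<omega> (Suc k))
     + (if fst (cfg G \<sigma> \<pi> \<omega> (Suc k)) \<noteq> out_loc G then \<epsilon> else 0)"

lemma measurable_increment: "increment k \<in> borel_measurable (run_space D)"
proof -
  have "(\<lambda>\<omega>. fst (cfg G \<sigma> \<pi> \<omega> (Suc k))) \<in> run_space D \<rightarrow>\<^sub>M count_space UNIV"
    using measurable_cfg by (rule measurable_compose) simp
  then have "(\<lambda>\<omega>. if fst (cfg G \<sigma> \<pi> \<omega> (Suc k)) \<noteq> out_loc G then \<epsilon> else 0) \<in> borel_measurable (run_space D)"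
    by (rule measurable_compose) simp
  then show ?thesis
    unfolding increment_def[abs_def] by (intro borel_measurable_add borel_measurable_diff measurable_eta_cfg)
qed

lemma increment_prefix_determined: "k < length p \<Longrightarrow> increment k (p @- \<omega>) = increment k (p @- \<omega>')"
  unfolding increment_def cfg_Suc
  using hist_shift_append_eq[of "Suc k" p \<omega> \<omega>'] hist_shift_append_eq[of k p \<omega> \<omega>'] by simp

lemma increment_next_sample:
  fixes p :: "((real^'r) \<times> real) list" and \<omega> :: "((real^'r) \<times> real) stream"
  defines "h \<equiv> hist G \<sigma> \<pi> (p @- \<omega>) (length p)"
  shows "increment (length p) (p @- (s ## \<omega>)) =
    eta_cfg (last (extend_hist h s)) - eta_cfg (last h) + (if fst (last h) \<noteq> out_loc G then \<epsilon> else 0)"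
proof -
  have "hist G \<sigma> \<pi> (p @- (s ## \<omega>)) (length p) = h"
    unfolding h_def by (rule hist_shift_append_eq) simp
  then show ?thesis
    unfolding increment_def cfg_Suc hist_Suc_extend_hist by simp
qed

lemma expectation_increment_nonpos:
  assumes "list_all admissible_sample p"
  shows "(\<integral>s. increment (length p) (p @- (s ## \<omega>)) \<partial>step_space D) \<le> 0"
proof -
  define h where "h = hist G \<sigma> \<pi> (p @- \<omega>) (length p)"
  have path: "is_path G D h"
    unfolding h_def using assms by (intro is_path_hist) (auto simp: list_all_length)
  then have "h \<noteq> []"
    by (simp add: is_path_def)
  obtain l y where ly: "last h = (l, y)"
    by (cases "last h")
  show ?thesis
  proof (cases "l = out_loc G")
    case True
    then show ?thesis
      unfolding increment_next_sample h_def[symmetric]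
      using last_extend_hist_out_loc[OF \<open>h \<noteq> []\<close>] ly by simp
  next
    case False
    note next_eta = integral_eta_extend_hist_le[OF path ly False]
    have "(\<integral>s. increment (length p) (p @- (s ## \<omega>)) \<partial>step_space D)
        = (\<integral>s. eta_cfg (last (extend_hist h s)) \<partial>step_space D) - \<eta> l y + \<epsilon>"
      unfolding increment_next_sample h_def[symmetric] using False ly next_eta(1)
      by (simp add: eta_cfg_def step.prob_space)
    with next_eta(2) show ?thesis
      by simp
  qed
qed

lemma cfg_Suc_Suc_out_loc:
  "fst (cfg G \<sigma> \<pi> \<omega> (Suc k)) = out_loc G \<Longrightarrow> cfg G \<sigma> \<pi> \<omega> (Suc (Suc k)) = cfg G \<sigma> \<pi> \<omega> (Suc k)"
  unfolding cfg_Suc hist_Suc_extend_hist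
  using length_hist[of \<omega> k] by (intro last_extend_hist_out_loc) auto

lemma AE_increment_in_interval:
  assumes "a \<le> -\<epsilon>" and "-\<epsilon> \<le> b"
    and "\<forall>k\<ge>1. AE \<omega> in run_space D.
      a \<le> eta_cfg (cfg G \<sigma> \<pi> \<omega> (Suc k)) - eta_cfg (cfg G \<sigma> \<pi> \<omega> k)
      \<and> eta_cfg (cfg G \<sigma> \<pi> \<omega> (Suc k)) - eta_cfg (cfg G \<sigma> \<pi> \<omega> k) \<le> b"
  shows "AE \<omega> in run_space D. \<forall>k. increment k \<omega> \<in> {a + \<epsilon>..b + \<epsilon>}"
proof -
  have "AE \<omega> in run_space D. \<forall>k. a \<le> eta_cfg (cfg G \<sigma> \<pi> \<omega> (Suc (Suc k))) - eta_cfg (cfg G \<sigma> \<pi> \<omega> (Suc k))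
      \<and> eta_cfg (cfg G \<sigma> \<pi> \<omega> (Suc (Suc k))) - eta_cfg (cfg G \<sigma> \<pi> \<omega> (Suc k)) \<le> b"
    unfolding AE_all_countable using assms(3) by simp
  then show ?thesis
    by (rule eventually_mono) (use assms(1,2) cfg_Suc_Suc_out_loc in \<open>auto simp: increment_def\<close>)
qed

lemma sum_increment_ge:
  assumes path: "\<forall>n. is_path G D (hist G \<sigma> \<pi> \<omega> n)"
    and running: "\<forall>m. 1 \<le> m \<and> m \<le> Suc N \<longrightarrow> fst (cfg G \<sigma> \<pi> \<omega> m) \<noteq> out_loc G"
  shows "\<epsilon> * real N - \<eta> (init_loc G) (init_val G) \<le> (\<Sum>k<N. increment k \<omega>)"
proof -
  define X where "X n = eta_cfg (cfg G \<sigma> \<pi> \<omega> (Suc n))" for n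
  have "(\<Sum>k<N. increment k \<omega>) = (\<Sum>k<N. X (Suc k) - X k + \<epsilon>)"
    using running by (intro sum.cong) (auto simp: increment_def X_def)
  also have "\<dots> = X N - X 0 + real N * \<epsilon>"
    by (simp add: sum.distrib sum_lessThan_telescope)
  finally have sum: "(\<Sum>k<N. increment k \<omega>) = X N - \<eta> (init_loc G) (init_val G) + real N * \<epsilon>"
    by (simp add: X_def cfg_Suc eta_cfg_def)
  obtain l y where ly: "cfg G \<sigma> \<pi> \<omega> (Suc N) = (l, y)"
    by (cases "cfg G \<sigma> \<pi> \<omega> (Suc N)")
  have "l \<noteq> out_loc G"
    using running ly by auto
  moreover have "inv_sat I l y"
    using inv_sat_last_path[OF path[rule_format, of N]] ly by (simp add: cfg_Suc)
  ultimately have "0 \<le> X N"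
    using eta_nonneg ly by (simp add: X_def eta_cfg_def)
  with sum show ?thesis
    by (simp add: mult.commute)
qed

lemma measure_term_time_gt_le:
  "measure (run_space D) {\<omega> \<in> space (run_space D). ereal (real (Suc N)) < ereal_of_enat (term_time G \<sigma> \<pi> \<omega>)}
     \<le> measure (run_space D)
         {\<omega> \<in> space (run_space D). \<epsilon> * real N - \<eta> (init_loc G) (init_val G) \<le> (\<Sum>k<N. increment k \<omega>)}"
proof (rule run.finite_measure_mono_AE)
  have [measurable]: "increment k \<in> borel_measurable (run_space D)" for k
    by (rule measurable_increment)
  show "{\<omega> \<in> space (run_space D). \<epsilon> * real N - \<eta> (init_loc G) (init_val G) \<le> (\<Sum>k<N. increment k \<omega>)}
      \<in> sets (run_space D)"
    by measurable
  show "AE \<omega> in run_space D. \<omega> \<in> {\<omega> \<in> space (run_space D). ereal (real (Suc N)) < ereal_of_enat (term_time G \<sigma> \<pi> \<omega>)}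
      \<longrightarrow> \<omega> \<in> {\<omega> \<in> space (run_space D). \<epsilon> * real N - \<eta> (init_loc G) (init_val G) \<le> (\<Sum>k<N. increment k \<omega>)}"
    using AE_is_path_hist
  proof eventually_elim
    case (elim \<omega>)
    have "\<forall>m. 1 \<le> m \<and> m \<le> Suc N \<longrightarrow> fst (cfg G \<sigma> \<pi> \<omega> m) \<noteq> out_loc G"
      if "ereal (real (Suc N)) < ereal_of_enat (term_time G \<sigma> \<pi> \<omega>)"
      using cfg_not_out_loc_before_term_time[OF that] by blast
    then show ?case
      using sum_increment_ge[OF elim] by (auto simp: space_run_space[OF rv_dist])
  qed
qed

lemma bounded_supermartingale_increments_run:
  assumes "a \<le> -\<epsilon>" and "-\<epsilon> \<le> b"
    and "\<forall>k\<ge>1. AE \<omega> in run_space D.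
      a \<le> eta_cfg (cfg G \<sigma> \<pi> \<omega> (Suc k)) - eta_cfg (cfg G \<sigma> \<pi> \<omega> k)
      \<and> eta_cfg (cfg G \<sigma> \<pi> \<omega> (Suc k)) - eta_cfg (cfg G \<sigma> \<pi> \<omega> k) \<le> b"
  shows "bounded_supermartingale_increments (step_space D) increment admissible_sample (a + \<epsilon>) (b + \<epsilon>)"
  by unfold_locales
    (fact measurable_increment[unfolded run_space_def] increment_prefix_determined AE_admissible_sample
      expectation_increment_nonpos AE_increment_in_interval[OF assms, unfolded run_space_def])+


lemma prob_term_time_gt_le:
  assumes "a \<le> -\<epsilon>" and "-\<epsilon> \<le> b"
    and "\<forall>k\<ge>1. AE \<omega> in run_space D.
      a \<le> eta_cfg (cfg G \<sigma> \<pi> \<omega> (Suc k)) - eta_cfg (cfg G \<sigma> \<pi> \<omega> k)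
      \<and> eta_cfg (cfg G \<sigma> \<pi> \<omega> (Suc k)) - eta_cfg (cfg G \<sigma> \<pi> \<omega> k) \<le> b"
    and "\<eta> (init_loc G) (init_val G) \<le> \<epsilon> * real N"
  shows "measure (run_space D) {\<omega> \<in> space (run_space D). ereal (real (Suc N)) < ereal_of_enat (term_time G \<sigma> \<pi> \<omega>)}
    \<le> exp (- (2 * (\<epsilon> * real N - \<eta> (init_loc G) (init_val G))\<^sup>2) / (real N * (b - a)\<^sup>2))"
proof -
  interpret azuma: bounded_supermartingale_increments "step_space D" increment admissible_sample "a + \<epsilon>" "b + \<epsilon>"
    by (rule bounded_supermartingale_increments_run[OF assms(1-3)])
  note measure_term_time_gt_le
  also have "measure (run_space D)
      {\<omega> \<in> space (run_space D). \<epsilon> * real N - \<eta> (init_loc G) (init_val G) \<le> (\<Sum>k<N. increment k \<omega>)}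
    \<le> exp (- (2 * (\<epsilon> * real N - \<eta> (init_loc G) (init_val G))\<^sup>2) / (real N * ((b + \<epsilon>) - (a + \<epsilon>))\<^sup>2))"
    unfolding run_space_def by (rule azuma.Azuma_Hoeffding_ineq_ge) (use assms(4) in simp)
  finally show ?thesis
    by simp
qed
end

theorem mainTheorem10:
  fixes G :: "('l::finite, 'x::finite, 'r::finite) sgs"
    and D :: "(real^'r) measure"
    and I :: "'l \<Rightarrow> 'x lassert list"
    and \<eta> :: "'l \<Rightarrow> real^'x \<Rightarrow> real"
    and \<epsilon> K K' a b :: real
    and \<sigma> \<pi> :: "('l, 'x) config list \<Rightarrow> nat"
    and n :: int
  assumes "wf_sgs G" and "rv_dist D"
    and "linear_invariant G D I"
    and "is_lrsm G D I \<eta> \<epsilon> K K'"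
    and "scheduler G Angelic \<sigma>" and "greedy G D \<eta> \<sigma>"
    and "scheduler G Demonic \<pi>"
    and "\<forall>k. (\<lambda>\<omega>. cfg G \<sigma> \<pi> \<omega> k) \<in> run_space D \<rightarrow>\<^sub>M (count_space UNIV \<Otimes>\<^sub>M borel)"
    and "a < b" and "a \<le> -\<epsilon>" and "-\<epsilon> \<le> b"
    and "\<forall>k\<ge>1. AE \<omega> in run_space D.
           a \<le> \<eta> (fst (cfg G \<sigma> \<pi> \<omega> (Suc k))) (snd (cfg G \<sigma> \<pi> \<omega> (Suc k)))
                - \<eta> (fst (cfg G \<sigma> \<pi> \<omega> k)) (snd (cfg G \<sigma> \<pi> \<omega> k))
         \<and> \<eta> (fst (cfg G \<sigma> \<pi> \<omega> (Suc k))) (snd (cfg G \<sigma> \<pi> \<omega> (Suc k)))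
                - \<eta> (fst (cfg G \<sigma> \<pi> \<omega> k)) (snd (cfg G \<sigma> \<pi> \<omega> k)) \<le> b"
    and "real_of_int n > \<eta> (init_loc G) (init_val G) / \<epsilon> + 1"
  shows "measure (run_space D)
           {\<omega> \<in> space (run_space D). ereal (real_of_int n) < ereal_of_enat (term_time G \<sigma> \<pi> \<omega>)}
         \<le> exp (- (2 * (\<epsilon> * (real_of_int n - 1) - \<eta> (init_loc G) (init_val G))\<^sup>2)
                 / ((real_of_int n - 1) * (b - a)\<^sup>2))"
proof -
  interpret lrsm_run G D \<sigma> \<pi> I \<eta> \<epsilon> K K'
    using assms(1-8) by unfold_locales auto
  let ?W\<^sub>0 = "\<eta> (init_loc G) (init_val G)"
  show ?thesis
  proof (cases "n \<le> 1")
    case True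
    then have "2 * (\<epsilon> * (real_of_int n - 1) - ?W\<^sub>0)\<^sup>2 / ((real_of_int n - 1) * (b - a)\<^sup>2) \<le> 0"
      by (intro divide_nonneg_nonpos mult_nonpos_nonneg) simp_all
    then have "1 \<le> exp (- (2 * (\<epsilon> * (real_of_int n - 1) - ?W\<^sub>0)\<^sup>2) / ((real_of_int n - 1) * (b - a)\<^sup>2))"
      by simp
    with run.prob_le_1 show ?thesis
      by (rule order_trans)
  next
    case False
    define N where "N = nat (n - 1)"
    have N: "real_of_int n = real (Suc N)"
      using False by (simp add: N_def)
    have "?W\<^sub>0 \<le> \<epsilon> * real N"
      using assms(13) epsilon_ge_1 by (simp add: N divide_less_eq mult.commute)
    from prob_term_time_gt_le[OF assms(10,11) assms(12)[folded eta_cfg_def] this] show ?thesis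
      by (simp add: N)
  qed
qed

end
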